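(* Assume $\mathbb{P}$ satisfies C1 and C2, and let $L>L_{\mathbb{P}}(\bar g)$. For all $\epsilon,\gamma>0$ and all $n$, except with probability at most $\Lambda_n(L)+\mathcal{N}(\mathfrak{D},\epsilon)\,\Gamma_n(\gamma)$: (a) if $g$ satisfies A1–A4 or $(g,\mathfrak{D})$ satisfy B1–B4, then $\sup_{D\in\mathfrak{D}}|F_X(D)-\mathbb{E}f_x(D)|\le 2L\epsilon+\gamma$; (b) if $(g,\mathfrak{D})$ satisfy B1–B3 (with constant $\kappa$), then $\sup_{D\in\mathfrak{D}}|F_X(D)-\mathbb{E}f_x(D)|\le2L\epsilon\big(1+\epsilon/\sqrt\kappa\big)+\gamma$.
   Context: A penalty is $g:\mathbb{R}^d\to\mathbb{R}\cup\{+\infty\}$; $\mathfrak{D}\subset\mathbb{R}^{m\times d}$. $\mathcal{L}_x(D,\alpha)=\tfrac12\|x-D\alpha\|_2^2+g(\alpha)$, $f_x(D)=\inf_\alpha\mathcal{L}_x(D,\alpha)$, $F_X(D)=\frac1n\sum_i f_{x_i}(D)$. $\|\Delta\|_{1\to2}=\max_j\|\delta_j\|_2$. A1: $g\ge0$; A2: $g$ lower semi-continuous; A3: $g(\alpha)\to+\infty$ as $\|\alpha\|\to\infty$; A4: $g(0)=0$. B1: $g=\chi_{\mathcal K}$ (indicator of $\mathcal K$); B2: there is $\kappa>0$ with $\kappa\|\alpha\|_1^2\le\|D\alpha\|_2^2$ for $\alpha\in\mathcal K$, $D\in\mathfrak{D}$; B3: $0\in\mathcal K$; B4: $\mathfrak{D}$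 convex. $\bar g(t)=\sup\{\|\alpha\|_1:g(\alpha)\le t\}$ under A1–A4, $\bar g(t)=2\sqrt{2t/\kappa}$ under B1–B3. $L_X(\bar g)=\frac1n\sum_i\|x_i\|_2\bar g(\|x_i\|_2^2/2)$. $\mathbb{P}$ is a distribution on $\mathbb{R}^m$, $x_1,\dots,x_n$ i.i.d. $\sim\mathbb{P}$, $X=[x_1,\dots,x_n]$. $L_{\mathbb{P}}(\bar g)=\mathbb{E}\|x\|_2\bar g(\|x\|_2^2/2)$. $\Lambda_n(L)=\mathbb{P}(L_X(\bar g)>L)$, $\Gamma_n(\gamma)=\sup_{D\in\mathfrak{D}}\mathbb{P}(|F_X(D)-\mathbb{E}f_x(D)|>\gamma)$. C1: $L_{\mathbb{P}}(\bar g)<\infty$. C2: there are $c>0$, $T\in(0,\infty]$ with $\Gamma_n(c\tau)\le2e^{-n\tau^2}$ for all $0\le\tau\le T$ and all $n$. $\mathcal{N}(\mathfrak{D},\epsilon)$ is the minimal cardinality of $\mathfrak{Q}\subset\mathfrak{D}$ such that each $D\in\mathfrak{D}$ has some $q\in\mathfrak{Q}$ with $\|D-q\|_{1\to2}\le\epsilon$. *)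

theory Defs
  imports "HOL-Analysis.Analysis" "HOL-Probability.Probability"
begin

text \<open>Vectors alpha in R^d are real^'d, signals x in R^m are real^'m,
  dictionaries D in R^(m x d) are real^'d^'m (m rows, d columns), so D *v alpha is in R^m.
  Penalties take values in ereal (to allow +infinity).\<close>

definition l1norm :: "real^'d \<Rightarrow> real" where
  "l1norm \<alpha> = (\<Sum>j\<in>UNIV. \<bar>\<alpha> $ j\<bar>)"

text \<open>The 1-to-2 operator norm: maximal Euclidean norm of a column.\<close>
definition norm12 :: "real^'d^'m \<Rightarrow> real" where
  "norm12 \<Delta> = Max (range (\<lambda>j. norm (column j \<Delta>)))"

definition lossL :: "real^'m \<Rightarrow> real^'d^'m \<Rightarrow> (real^'d \<Rightarrow> ereal) \<Rightarrow> real^'d \<Rightarrow> ereal" where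
  "lossL x D g \<alpha> = ereal (1/2 * (norm (x - D *v \<alpha>))^2) + g \<alpha>"

definition fx :: "(real^'d \<Rightarrow> ereal) \<Rightarrow> real^'m \<Rightarrow> real^'d^'m \<Rightarrow> real" where
  "fx g x D = real_of_ereal (INF \<alpha>. lossL x D g \<alpha>)"

definition FX :: "(real^'d \<Rightarrow> ereal) \<Rightarrow> nat \<Rightarrow> (nat \<Rightarrow> real^'m) \<Rightarrow> real^'d^'m \<Rightarrow> real" where
  "FX g n X D = (\<Sum>i<n. fx g (X i) D) / real n"

definition Ef :: "(real^'m) measure \<Rightarrow> (real^'d \<Rightarrow> ereal) \<Rightarrow> real^'d^'m \<Rightarrow> real" where
  "Ef P g D = (\<integral>x. fx g x D \<partial>P)"

definition sampleM :: "(real^'m) measure \<Rightarrow> nat \<Rightarrow> (nat \<Rightarrow> real^'m) measure" where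
  "sampleM P n = PiM {..<n} (\<lambda>_. P)"

definition gbarA :: "(real^'d \<Rightarrow> ereal) \<Rightarrow> real \<Rightarrow> real" where
  "gbarA g t = Sup {l1norm \<alpha> | \<alpha>. g \<alpha> \<le> ereal t}"

definition gbarB :: "real \<Rightarrow> real \<Rightarrow> real" where
  "gbarB \<kappa> t = 2 * sqrt (2 * t / \<kappa>)"

definition LX :: "(real \<Rightarrow> real) \<Rightarrow> nat \<Rightarrow> (nat \<Rightarrow> real^'m) \<Rightarrow> real" where
  "LX gbar n X = (\<Sum>i<n. norm (X i) * gbar ((norm (X i))^2 / 2)) / real n"

definition LP :: "(real^'m) measure \<Rightarrow> (real \<Rightarrow> real) \<Rightarrow> ennreal" where
  "LP P gbar = (\<integral>\<^sup>+ x. ennreal (norm x * gbar ((norm x)^2 / 2)) \<partial>P)"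

definition Lambda_n :: "(real^'m) measure \<Rightarrow> (real \<Rightarrow> real) \<Rightarrow> nat \<Rightarrow> real \<Rightarrow> ennreal" where
  "Lambda_n P gbar n L = emeasure (sampleM P n) {X \<in> space (sampleM P n). LX gbar n X > L}"

definition Gamma_n :: "(real^'m) measure \<Rightarrow> (real^'d \<Rightarrow> ereal) \<Rightarrow> (real^'d^'m) set \<Rightarrow> nat \<Rightarrow> real \<Rightarrow> ennreal" where
  "Gamma_n P g \<D> n \<gamma> = (SUP D\<in>\<D>. emeasure (sampleM P n)
      {X \<in> space (sampleM P n). \<bar>FX g n X D - Ef P g D\<bar> > \<gamma>})"

text \<open>Covering number (infinite if no finite epsilon-net exists).\<close>
definition covN :: "(real^'d^'m) set \<Rightarrow> real \<Rightarrow> ennreal" where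
  "covN \<D> \<epsilon> = (INF Q\<in>{Q. finite Q \<and> Q \<subseteq> \<D> \<and> (\<forall>D\<in>\<D>. \<exists>q\<in>Q. norm12 (D - q) \<le> \<epsilon>)}.
      of_nat (card Q))"

definition lsc :: "('a::topological_space \<Rightarrow> ereal) \<Rightarrow> bool" where
  "lsc g \<longleftrightarrow> (\<forall>a. g a \<le> Liminf (at a) g)"

definition condA :: "(real^'d \<Rightarrow> ereal) \<Rightarrow> bool" where
  "condA g \<longleftrightarrow> (\<forall>\<alpha>. g \<alpha> \<ge> 0) \<and> lsc g \<and> (g \<longlongrightarrow> \<infinity>) at_infinity \<and> g 0 = 0"

definition indicatorE :: "'a set \<Rightarrow> 'a \<Rightarrow> ereal" where
  "indicatorE K \<alpha> = (if \<alpha> \<in> K then 0 else \<infinity>)"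

definition condB123 :: "(real^'d \<Rightarrow> ereal) \<Rightarrow> (real^'d^'m) set \<Rightarrow> real \<Rightarrow> (real^'d) set \<Rightarrow> bool" where
  "condB123 g \<D> \<kappa> K \<longleftrightarrow> \<kappa> > 0 \<and> g = indicatorE K
     \<and> (\<forall>\<alpha>\<in>K. \<forall>D\<in>\<D>. \<kappa> * (l1norm \<alpha>)^2 \<le> (norm (D *v \<alpha>))^2)
     \<and> 0 \<in> K"

definition condC2 :: "(real^'m) measure \<Rightarrow> (real^'d \<Rightarrow> ereal) \<Rightarrow> (real^'d^'m) set \<Rightarrow> bool" where
  "condC2 P g \<D> \<longleftrightarrow> (\<exists>c>0. \<exists>T::ereal. T > 0 \<and>
     (\<forall>n \<tau>. 0 \<le> \<tau> \<and> ereal \<tau> \<le> T \<longrightarrow> Gamma_n P g \<D> n (c * \<tau>) \<le> ennreal (2 * exp (- real n * \<tau>^2))))"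

text \<open>"Except with probability at most p, property Q holds for the sample X".\<close>
definition except_prob :: "(nat \<Rightarrow> real^'m) measure \<Rightarrow> ennreal \<Rightarrow> ((nat \<Rightarrow> real^'m) \<Rightarrow> bool) \<Rightarrow> bool" where
  "except_prob M p Q \<longleftrightarrow> (\<exists>E\<in>sets M. emeasure M E \<le> p \<and> (\<forall>X\<in>space M - E. Q X))"

end

theory Submission
  imports Defs
begin

text \<open>
  The argument has a deterministic and a probabilistic half.  Deterministically, for a fixed
  signal \<open>x\<close> the cost \<open>f_x(D)\<close> is Lipschitz in the dictionary w.r.t. the \<open>1\<rightarrow>2\<close> norm:
  compare \<open>f_x(D')\<close> with the loss of a near-optimal code \<open>\<alpha>\<close> for \<open>D\<close>, use
  \<open>|(D' - D)\<alpha>| \<le> |D' - D|\<^sub>1\<^sub>\<rightarrow>\<^sub>2 |\<alpha>|\<^sub>1\<close>, and bound \<open>|\<alpha>|\<^sub>1\<close> by \<open>gbar(|x|\<^sup>2/2)\<close> for every code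
  that does at least as well as the zero code.  This leaves a quadratic remainder; under A1--A4
  or B1--B4 the code bound holds along the whole segment from \<open>D\<close> to \<open>D'\<close>, and subdividing
  the segment removes the remainder, while under B1--B3 alone it survives as the factor
  \<open>1 + \<epsilon>/\<surd>\<kappa>\<close>.  Averaging over the sample, resp. integrating over \<open>P\<close>, turns the modulus
  \<open>|x| gbar(|x|\<^sup>2/2)\<close> into \<open>L_X(gbar)\<close>, resp. \<open>L_P(gbar) < L\<close>.
  Probabilistically, outside the event \<open>L_X(gbar) > L\<close> and the events
  \<open>|F_X(q) - E f_x(q)| > \<gamma>\<close> for \<open>q\<close> in an \<open>\<epsilon>\<close>-net, every \<open>D\<close> satisfies the claimed bound by the
  triangle inequality; a union bound over a minimal finite net (or a countable net when no
  finite net exists, which matters only if \<open>\<Gamma>_n(\<gamma>) = 0\<close>) bounds the exceptional probability.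
\<close>

lemma column_le_norm12: "norm (column j A) \<le> norm12 (A::real^'d^'m)"
  unfolding norm12_def by (rule Max_ge) auto

lemma norm12_nonneg: "0 \<le> norm12 (A::real^'d^'m)"
  by (meson column_le_norm12 norm_ge_zero order_trans)

lemma norm_mulvec_le_norm12: "norm ((A::real^'d^'m) *v a) \<le> norm12 A * l1norm a"
proof -
  have "norm (A *v a) = norm (\<Sum>j\<in>UNIV. (a$j) *s column j A)" by (simp add: matrix_mult_sum)
  also have "\<dots> \<le> (\<Sum>j\<in>UNIV. \<bar>a$j\<bar> * norm (column j A))"
    by (rule order_trans[OF norm_sum]) (simp add: scalar_mult_eq_scaleR)
  also have "\<dots> \<le> (\<Sum>j\<in>UNIV. \<bar>a$j\<bar> * norm12 A)"
    by (intro sum_mono mult_left_mono column_le_norm12) auto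
  also have "\<dots> = norm12 A * l1norm a" by (simp add: l1norm_def sum_distrib_left mult.commute)
  finally show ?thesis .
qed

text \<open>The \<open>1\<rightarrow>2\<close> norm is dominated by the Frobenius norm, so metric \<open>\<epsilon>\<close>-nets are \<open>1\<rightarrow>2\<close>-nets.\<close>

lemma norm12_le_norm: "norm12 (A::real^'d^'m) \<le> norm A"
proof -
  have "norm (column j A) \<le> norm A" for j
  proof -
    have "norm (column j A) = L2_set (\<lambda>i. norm (A$i$j)) UNIV"
      by (simp add: norm_vec_def column_def)
    also have "\<dots> \<le> L2_set (\<lambda>i. norm (A$i)) UNIV"
      by (rule L2_set_mono) (auto simp: component_le_norm_cart)
    finally show ?thesis by (simp add: norm_vec_def)
  qed
  then show ?thesis unfolding norm12_def by (auto intro: Max.boundedI)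
qed

lemma norm12_minus_commute: "norm12 ((A::real^'d^'m) - B) = norm12 (B - A)"
proof -
  have "column j (A - B) = - column j (B - A)" for j by (simp add: column_def vec_eq_iff)
  then show ?thesis unfolding norm12_def by simp
qed

lemma l1norm_nonneg: "0 \<le> l1norm a"
  unfolding l1norm_def by (simp add: sum_nonneg)

text \<open>Equivalence of norms in the direction needed to bound sublevel sets of a coercive penalty.\<close>

lemma l1norm_le_card_norm: "l1norm (a::real^'d) \<le> real CARD('d) * norm a"
proof -
  have "l1norm a \<le> (\<Sum>j\<in>(UNIV::'d set). norm a)" unfolding l1norm_def
    by (intro sum_mono component_le_norm_cart)
  then show ?thesis by simp
qed

text \<open>A function on \<open>[0,1]\<close> whose increments are at most linear plus a quadratic remainder grows
  at most linearly: subdividing \<open>[0,1]\<close> into \<open>k\<close> pieces, the remainders add up to \<open>b/k \<rightarrow> 0\<close>.\<close>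

lemma linear_growth_of_quadratic_increments:
  fixes h :: "real \<Rightarrow> real"
  assumes b: "b \<ge> 0"
    and step: "\<And>s t. 0 \<le> s \<Longrightarrow> s \<le> t \<Longrightarrow> t \<le> 1 \<Longrightarrow> h t \<le> h s + a * (t - s) + b * (t - s)^2"
  shows "h 1 \<le> h 0 + a"
proof -
  have subdivided: "h 1 \<le> h 0 + a + b / real k" if k: "k \<ge> 1" for k :: nat
  proof -
    define u where "u = 1 / real k"
    have u: "0 < u" "real k * u = 1" using k by (auto simp: u_def)
    have "h (real i * u) \<le> h 0 + a * (real i * u) + b * (real i * u^2)" if "i \<le> k" for i
      using that
    proof (induction i)
      case 0
      then show ?case by simp
    next
      case (Suc i)
      have "real (Suc i) * u \<le> 1"
        using Suc.prems u mult_right_mono[of "real (Suc i)" "real k" u] by simp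
      then have "h (real (Suc i) * u) \<le> h (real i * u) + a * u + b * u^2"
        using step[of "real i * u" "real (Suc i) * u"] u by (simp add: distrib_right)
      with Suc show ?case by (simp add: distrib_left distrib_right)
    qed
    from this[of k] u show ?thesis by (simp add: u_def power2_eq_square)
  qed
  have "(\<lambda>k. h 0 + a + b / real k) \<longlonglongrightarrow> h 0 + a"
    using tendsto_add[OF tendsto_const lim_const_over_n[of b]] by simp
  then show ?thesis
    by (rule LIMSEQ_le_const) (use subdivided in \<open>auto intro: exI[of _ 1]\<close>)
qed

text \<open>The real value of a penalty (meaningful where it is finite).\<close>

definition greal :: "('a \<Rightarrow> ereal) \<Rightarrow> 'a \<Rightarrow> real" where
  "greal g a = real_of_ereal (g a)"

text \<open>The properties A1 and A4, shared by both settings (B1 and B3 imply them).  They make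
  \<open>f_x\<close> finite with \<open>f_x(D) \<le> |x|\<^sup>2/2\<close>, the loss of the zero code.\<close>

locale penalty =
  fixes g :: "real^'d \<Rightarrow> ereal"
  assumes g_nonneg: "\<And>a. g a \<ge> 0" and g_zero: "g 0 = 0"
begin

lemma greal_nonneg: "0 \<le> greal g a"
  using g_nonneg[of a] unfolding greal_def by (simp add: real_of_ereal_pos)

lemma lossL_finite: "g a \<noteq> \<infinity> \<Longrightarrow> lossL x D g a = ereal (1/2 * (norm (x - D *v a))^2 + greal g a)"
  using g_nonneg[of a] unfolding lossL_def greal_def by (cases "g a") auto

lemma fx_as_INF: "ereal (fx g x D) = (INF a. lossL x D g a)"
proof -
  have "0 \<le> (INF a. lossL x D g a)"
    by (rule INF_greatest) (use g_nonneg in \<open>auto simp: lossL_def intro!: add_nonneg_nonneg\<close>)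
  moreover have "(INF a. lossL x D g a) \<le> lossL x D g 0" by (rule INF_lower) auto
  ultimately show ?thesis
    unfolding fx_def by (cases "(INF a. lossL x D g a)") (auto simp: lossL_def g_zero)
qed

lemma fx_le_lossL:
  assumes "g a \<noteq> \<infinity>"
  shows "fx g y D \<le> 1/2 * (norm (y - D *v a))^2 + greal g a"
proof -
  have "ereal (fx g y D) \<le> lossL y D g a" unfolding fx_as_INF by (rule INF_lower) simp
  then show ?thesis unfolding lossL_finite[OF assms] by simp
qed

lemma fx_le_half_norm: "fx g x D \<le> 1/2 * (norm x)^2"
  using fx_le_lossL[of 0 x D] by (simp add: g_zero greal_def)

text \<open>For every \<open>\<delta> > 0\<close> there is a \<open>\<delta>\<close>-optimal code which moreover does no worse than the zero
  code; only such competitive codes need to be controlled in \<open>\<ell>\<^sub>1\<close>-norm.\<close>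

lemma near_optimal_code:
  assumes "\<delta> > 0"
  obtains a where "g a \<noteq> \<infinity>" "1/2 * (norm (x - D *v a))^2 + greal g a \<le> fx g x D + \<delta>"
    "1/2 * (norm (x - D *v a))^2 + greal g a \<le> 1/2 * (norm x)^2"
proof (cases "fx g x D = 1/2 * (norm x)^2")
  case True
  then show ?thesis using assms that[of 0] by (simp add: g_zero greal_def)
next
  case False
  with fx_le_half_norm[of x D] have lt: "fx g x D < 1/2 * (norm x)^2" by simp
  define d where "d = min \<delta> (1/2 * (norm x)^2 - fx g x D)"
  have "d > 0" using lt assms by (simp add: d_def)
  then have "(INF a. lossL x D g a) < ereal (fx g x D + d)" by (simp flip: fx_as_INF)
  then obtain a where a: "lossL x D g a < ereal (fx g x D + d)" by (auto simp: INF_less_iff)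
  have fin: "g a \<noteq> \<infinity>" using a by (auto simp: lossL_def)
  from a have "1/2 * (norm (x - D *v a))^2 + greal g a < fx g x D + d"
    by (simp add: lossL_finite[OF fin])
  then show ?thesis using fin that[of a] by (auto simp: d_def)
qed

lemma fx_perturbation:
  assumes E: "E \<ge> 0"
    and bnd: "\<And>a. g a \<noteq> \<infinity> \<Longrightarrow> 1/2 * (norm (x - D *v a))^2 + greal g a \<le> 1/2 * (norm x)^2
                   \<Longrightarrow> norm ((D' - D) *v a) \<le> E"
  shows "fx g y D' \<le> fx g x D + norm x * (norm (y - x) + E) + (norm (y - x) + E)^2 / 2"
proof (rule field_le_epsilon)
  fix \<delta> :: real assume "\<delta> > 0"
  then obtain a where fin: "g a \<noteq> \<infinity>"
    and near: "1/2 * (norm (x - D *v a))^2 + greal g a \<le> fx g x D + \<delta>"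
    and competitive: "1/2 * (norm (x - D *v a))^2 + greal g a \<le> 1/2 * (norm x)^2"
    by (rule near_optimal_code)
  define u where "u = x - D *v a"
  define w where "w = (y - x) - (D' - D) *v a"
  define r where "r = norm (y - x) + E"
  have "norm ((D' - D) *v a) \<le> E" using bnd fin competitive by blast
  then have w: "norm w \<le> r" unfolding w_def r_def by (smt (verit) norm_triangle_ineq4)
  have "(norm u)^2 \<le> (norm x)^2" using competitive greal_nonneg[of a] unfolding u_def by linarith
  then have u: "norm u \<le> norm x" using power2_le_imp_le norm_ge_zero by blast
  have "(norm (u + w))^2 \<le> (norm u + r)^2"
    using norm_triangle_ineq[of u w] w by (intro power_mono) auto
  also have "\<dots> \<le> (norm u)^2 + 2 * norm x * r + r^2"
    using u E by (simp add: power2_sum r_def mult_right_mono)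
  finally have sq: "(norm (u + w))^2 \<le> (norm u)^2 + 2 * norm x * r + r^2" .
  have "y - D' *v a = u + w" by (simp add: u_def w_def algebra_simps)
  then have "fx g y D' \<le> 1/2 * (norm (u + w))^2 + greal g a" using fx_le_lossL[OF fin] by metis
  also have "\<dots> \<le> fx g x D + \<delta> + norm x * r + r^2/2" using sq near by (simp add: u_def)
  finally show "fx g y D' \<le> fx g x D + norm x * (norm (y - x) + E) + (norm (y - x) + E)^2 / 2 + \<delta>"
    by (simp add: r_def)
qed

text \<open>For a fixed dictionary the cost is continuous in the signal, hence Borel measurable.\<close>

lemma fx_continuous: "continuous_on UNIV (\<lambda>x. fx g x D)"
proof -
  have "isCont (\<lambda>x. fx g x D) x" for x
  proof -
    have bound: "\<bar>fx g y D - fx g x D\<bar> \<le> (norm x + norm y) * norm (y - x) + (norm (y - x))^2/2" for y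
      using fx_perturbation[of 0 x D D y] fx_perturbation[of 0 y D D x] norm_minus_commute[of x y]
      by (simp add: abs_le_iff algebra_simps) (smt (verit) norm_ge_zero mult_nonneg_nonneg)
    have "((\<lambda>y. (norm x + norm y) * norm (y - x) + (norm (y - x))^2/2) \<longlongrightarrow>
             (norm x + norm x) * norm (x - x) + (norm (x - x))^2/2) (at x)"
      by (intro tendsto_intros) simp
    then have "((\<lambda>y. (norm x + norm y) * norm (y - x) + (norm (y - x))^2/2) \<longlongrightarrow> 0) (at x)"
      by simp
    then have "((\<lambda>y. fx g y D - fx g x D) \<longlongrightarrow> 0) (at x)"
      by (rule Lim_null_comparison[rotated]) (use bound in auto)
    then show ?thesis unfolding isCont_def by (simp add: LIM_zero_iff)
  qed
  then show ?thesis by (simp add: continuous_on_eq_continuous_at)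
qed

lemma fx_along_segment:
  assumes G: "G \<ge> 0"
    and bnd: "\<And>t a. 0 \<le> t \<Longrightarrow> t \<le> 1 \<Longrightarrow> g a \<noteq> \<infinity> \<Longrightarrow>
        1/2 * (norm (x - (D + t *\<^sub>R (q - D)) *v a))^2 + greal g a \<le> 1/2 * (norm x)^2 \<Longrightarrow>
        l1norm a \<le> G"
  shows "fx g x q \<le> fx g x D + norm x * G * norm12 (q - D)"
proof -
  define e where "e = norm12 (q - D)"
  have e: "e \<ge> 0" unfolding e_def by (rule norm12_nonneg)
  define h where "h t = fx g x (D + t *\<^sub>R (q - D))" for t
  have "h 1 \<le> h 0 + norm x * G * e"
  proof (rule linear_growth_of_quadratic_increments)
    show "0 \<le> (G * e)^2 / 2" by simp
    fix s t :: real assume st: "0 \<le> s" "s \<le> t" "t \<le> 1"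
    have "h t \<le> h s + norm x * (norm (x - x) + (t - s) * (G * e)) + (norm (x - x) + (t - s) * (G * e))^2 / 2"
      unfolding h_def
    proof (rule fx_perturbation)
      show "0 \<le> (t - s) * (G * e)" using st G e by simp
      fix a assume "g a \<noteq> \<infinity>"
        and "1/2 * (norm (x - (D + s *\<^sub>R (q - D)) *v a))^2 + greal g a \<le> 1/2 * (norm x)^2"
      then have a: "l1norm a \<le> G" using bnd st by auto
      have "(D + t *\<^sub>R (q - D)) - (D + s *\<^sub>R (q - D)) = (t - s) *\<^sub>R (q - D)"
        by (simp add: algebra_simps)
      then have "norm (((D + t *\<^sub>R (q - D)) - (D + s *\<^sub>R (q - D))) *v a) = (t - s) * norm ((q - D) *v a)"
        using st by (simp flip: scaleR_matrix_vector_assoc)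
      also have "\<dots> \<le> (t - s) * (e * G)"
        unfolding e_def using st a norm12_nonneg[of "q - D"]
        by (intro mult_left_mono order_trans[OF norm_mulvec_le_norm12]) auto
      finally show "norm (((D + t *\<^sub>R (q - D)) - (D + s *\<^sub>R (q - D))) *v a) \<le> (t - s) * (G * e)"
        by (simp add: mult.commute)
    qed
    then show "h t \<le> h s + norm x * G * e * (t - s) + (G * e)^2 / 2 * (t - s)^2"
      by (simp add: power_mult_distrib mult_ac)
  qed
  then show ?thesis by (simp add: h_def e_def)
qed

lemma fx_one_step:
  assumes G: "G \<ge> 0"
    and bnd: "\<And>a. g a \<noteq> \<infinity> \<Longrightarrow>
        1/2 * (norm (x - D *v a))^2 + greal g a \<le> 1/2 * (norm x)^2 \<Longrightarrow> l1norm a \<le> G"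
  shows "fx g x q \<le> fx g x D + norm x * G * norm12 (q - D) + (G * norm12 (q - D))^2 / 2"
proof -
  have "fx g x q \<le> fx g x D + norm x * (norm (x - x) + G * norm12 (q - D))
                     + (norm (x - x) + G * norm12 (q - D))^2 / 2"
  proof (rule fx_perturbation)
    show "0 \<le> G * norm12 (q - D)" using G norm12_nonneg[of "q - D"] by simp
    fix a assume "g a \<noteq> \<infinity>" "1/2 * (norm (x - D *v a))^2 + greal g a \<le> 1/2 * (norm x)^2"
    then have "l1norm a \<le> G" using bnd by blast
    then show "norm ((q - D) *v a) \<le> G * norm12 (q - D)"
      using norm12_nonneg[of "q - D"]
      by (metis mult.commute mult_left_mono norm_mulvec_le_norm12 order_trans)
  qed
  then show ?thesis by (simp add: algebra_simps)
qed

end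

lemma penalty_condA: "condA g \<Longrightarrow> penalty g"
  unfolding condA_def penalty_def by auto

lemma penalty_condB: "condB123 g \<D> \<kappa> K \<Longrightarrow> penalty g"
  unfolding condB123_def penalty_def indicatorE_def by auto

text \<open>Coercivity (A3) bounds the \<open>\<ell>\<^sub>1\<close>-norms on sublevel sets, so \<open>gbarA\<close> is a genuine supremum.\<close>

lemma condA_sublevel_bdd:
  assumes "condA g"
  shows "bdd_above {l1norm a | a. g a \<le> ereal t}"
proof -
  have "(g \<longlongrightarrow> \<infinity>) at_infinity" using assms by (simp add: condA_def)
  then have "eventually (\<lambda>a. ereal t < g a) at_infinity" by (simp add: tendsto_PInfty)
  then obtain b where b: "\<And>a. b \<le> norm a \<Longrightarrow> ereal t < g a" by (auto simp: eventually_at_infinity)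
  have "l1norm a \<le> real CARD('a) * b" if "g a \<le> ereal t" for a :: "real^'a"
  proof -
    have "norm a < b" using b[of a] that by (meson leD leI)
    then show ?thesis using l1norm_le_card_norm[of a] by (smt (verit) mult_left_mono of_nat_0_le_iff)
  qed
  then show ?thesis by (auto simp: bdd_above_def)
qed

lemma condA_code_bound:
  assumes "condA g" "g a \<noteq> \<infinity>" "greal g a \<le> t"
  shows "l1norm a \<le> gbarA g t"
proof -
  have "g a = ereal (greal g a)" using assms(1,2) unfolding condA_def greal_def
    by (cases "g a") auto
  then have "g a \<le> ereal t" using assms(3) by simp
  then show ?thesis unfolding gbarA_def by (intro cSup_upper condA_sublevel_bdd[OF assms(1)]) auto
qed

lemma gbarA_nonneg:
  assumes "condA g" "t \<ge> 0" shows "0 \<le> gbarA g t"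
  using condA_code_bound[OF assms(1), of 0 t] assms by (simp add: condA_def greal_def l1norm_def)

text \<open>Monotonicity of \<open>gbarA\<close>, used for the measurability of the weight \<open>|x| gbar(|x|\<^sup>2/2)\<close>.\<close>

lemma gbarA_mono:
  assumes "condA g" "0 \<le> s" "s \<le> t" shows "gbarA g s \<le> gbarA g t"
  unfolding gbarA_def
proof (rule cSup_subset_mono)
  show "{l1norm a |a. g a \<le> ereal s} \<noteq> {}" using assms by (auto simp: condA_def intro!: exI[of _ 0])
  show "bdd_above {l1norm a |a. g a \<le> ereal t}" by (rule condA_sublevel_bdd[OF assms(1)])
  show "{l1norm a |a. g a \<le> ereal s} \<subseteq> {l1norm a |a. g a \<le> ereal t}"
    using assms(3) by (force intro: order_trans)
qed

lemma gbarB_half_square: "\<kappa> > 0 \<Longrightarrow> gbarB \<kappa> ((norm x)^2 / 2) = 2 * norm x / sqrt \<kappa>"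
  unfolding gbarB_def by (simp add: real_sqrt_divide)

text \<open>Under B1--B3, a competitive code for \<open>(x, D)\<close> with \<open>D \<in> \<D>\<close> has \<open>|D\<alpha>| \<le> 2|x|\<close>, hence
  \<open>|\<alpha>|\<^sub>1 \<le> 2|x|/\<surd>\<kappa> = gbarB \<kappa> (|x|\<^sup>2/2)\<close> by B2.\<close>

lemma condB_code_bound:
  assumes B: "condB123 g \<D> \<kappa> K" and D: "D \<in> \<D>" and fin: "g a \<noteq> \<infinity>"
    and competitive: "1/2 * (norm (x - D *v a))^2 + greal g a \<le> 1/2 * (norm x)^2"
  shows "l1norm a \<le> gbarB \<kappa> ((norm x)^2 / 2)"
proof -
  have \<kappa>: "\<kappa> > 0" and g: "g = indicatorE K"
    and B2: "\<forall>a\<in>K. \<forall>D\<in>\<D>. \<kappa> * (l1norm a)^2 \<le> (norm (D *v a))^2"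
    using B by (auto simp: condB123_def)
  have aK: "a \<in> K" using fin g by (auto simp: indicatorE_def split: if_splits)
  then have "(norm (x - D *v a))^2 \<le> (norm x)^2" using competitive g by (simp add: greal_def indicatorE_def)
  then have "norm (x - D *v a) \<le> norm x" using power2_le_imp_le norm_ge_zero by blast
  then have Da: "norm (D *v a) \<le> 2 * norm x" using norm_triangle_ineq4[of x "x - D *v a"] by simp
  have "sqrt \<kappa> * l1norm a = sqrt (\<kappa> * (l1norm a)^2)"
    using l1norm_nonneg[of a] \<kappa> by (simp add: real_sqrt_mult)
  also have "\<dots> \<le> norm (D *v a)" using B2 aK D real_sqrt_le_mono by fastforce
  finally have "sqrt \<kappa> * l1norm a \<le> 2 * norm x" using Da by simp
  then show ?thesis using \<kappa> by (simp add: gbarB_half_square field_simps mult.commute)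
qed

lemma gbarB_nonneg: "\<kappa> > 0 \<Longrightarrow> t \<ge> 0 \<Longrightarrow> gbarB \<kappa> t \<ge> 0"
  by (simp add: gbarB_def)

text \<open>Lipschitz property of \<open>f_x\<close> under A1--A4: the code bound holds for every dictionary.\<close>

lemma fx_lipschitz_condA:
  assumes A: "condA g" and e: "norm12 (D - q) \<le> \<epsilon>"
  shows "\<bar>fx g x D - fx g x q\<bar> \<le> norm x * gbarA g ((norm x)^2/2) * \<epsilon>"
proof -
  interpret penalty g by (rule penalty_condA[OF A])
  define G where "G = gbarA g ((norm x)^2/2)"
  have G: "G \<ge> 0" unfolding G_def by (rule gbarA_nonneg[OF A]) simp
  have bnd: "l1norm a \<le> G"
    if "g a \<noteq> \<infinity>" "1/2 * (norm (x - M *v a))^2 + greal g a \<le> 1/2 * (norm x)^2" for M a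
    unfolding G_def using that by (intro condA_code_bound[OF A]) (auto intro: order_trans[rotated])
  have segment: "fx g x D' \<le> fx g x q' + norm x * G * norm12 (D' - q')" for D' q'
    by (rule fx_along_segment[OF G]) (rule bnd)
  have "fx g x q \<le> fx g x D + norm x * G * norm12 (D - q)"
    using segment[of q D] by (simp add: norm12_minus_commute)
  moreover have "fx g x D \<le> fx g x q + norm x * G * norm12 (D - q)"
    by (rule segment)
  moreover have "norm x * G * norm12 (D - q) \<le> norm x * G * \<epsilon>"
    using e G by (intro mult_left_mono) auto
  ultimately show ?thesis by (simp add: G_def abs_le_iff)
qed

text \<open>Lipschitz property of \<open>f_x\<close> on a convex \<open>\<D>\<close> (B1--B4): the segment stays inside \<open>\<D>\<close>.\<close>

lemma fx_lipschitz_condB_convex: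
  assumes B: "condB123 g \<D> \<kappa> K" and cv: "convex \<D>" and D: "D \<in> \<D>" and q: "q \<in> \<D>"
    and e: "norm12 (D - q) \<le> \<epsilon>"
  shows "\<bar>fx g x D - fx g x q\<bar> \<le> norm x * gbarB \<kappa> ((norm x)^2/2) * \<epsilon>"
proof -
  interpret penalty g by (rule penalty_condB[OF B])
  define G where "G = gbarB \<kappa> ((norm x)^2/2)"
  have G: "G \<ge> 0" unfolding G_def using B by (intro gbarB_nonneg) (auto simp: condB123_def)
  have segment: "A + t *\<^sub>R (C - A) \<in> \<D>" if "A \<in> \<D>" "C \<in> \<D>" "0 \<le> t" "t \<le> 1" for A C t
  proof -
    have "(1 - t) *\<^sub>R A + t *\<^sub>R C \<in> \<D>" using cv that unfolding convex_def by auto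
    then show ?thesis by (simp add: algebra_simps)
  qed
  have "fx g x q \<le> fx g x D + norm x * G * norm12 (D - q)"
    unfolding norm12_minus_commute[of D q]
    by (rule fx_along_segment[OF G]) (unfold G_def, rule condB_code_bound[OF B segment[OF D q]], auto)
  moreover have "fx g x D \<le> fx g x q + norm x * G * norm12 (D - q)"
    by (rule fx_along_segment[OF G]) (unfold G_def, rule condB_code_bound[OF B segment[OF q D]], auto)
  moreover have "norm x * G * norm12 (D - q) \<le> norm x * G * \<epsilon>"
    using e G by (intro mult_left_mono) auto
  ultimately show ?thesis by (simp add: G_def abs_le_iff)
qed

text \<open>Without convexity (B1--B3) the code bound is available only at the endpoints, so the
  quadratic remainder survives as the factor \<open>1 + \<epsilon>/\<surd>\<kappa>\<close>.\<close>

lemma fx_lipschitz_condB: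
  assumes B: "condB123 g \<D> \<kappa> K" and D: "D \<in> \<D>" and q: "q \<in> \<D>"
    and e: "norm12 (D - q) \<le> \<epsilon>"
  shows "\<bar>fx g x D - fx g x q\<bar> \<le> norm x * gbarB \<kappa> ((norm x)^2/2) * (\<epsilon> * (1 + \<epsilon> / sqrt \<kappa>))"
proof -
  interpret penalty g by (rule penalty_condB[OF B])
  have \<kappa>: "\<kappa> > 0" using B by (simp add: condB123_def)
  define G where "G = gbarB \<kappa> ((norm x)^2/2)"
  have G: "G \<ge> 0" unfolding G_def using \<kappa> by (intro gbarB_nonneg) auto
  define t where "t = norm12 (D - q)"
  have t: "0 \<le> t" "t \<le> \<epsilon>" using e norm12_nonneg unfolding t_def by auto
  have "fx g x q \<le> fx g x D + norm x * G * t + (G * t)^2 / 2"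
    unfolding t_def norm12_minus_commute[of D q]
    by (rule fx_one_step[OF G]) (unfold G_def, rule condB_code_bound[OF B D], auto)
  moreover have "fx g x D \<le> fx g x q + norm x * G * t + (G * t)^2 / 2"
    unfolding t_def by (rule fx_one_step[OF G]) (unfold G_def, rule condB_code_bound[OF B q], auto)
  moreover have "norm x * G * t + (G * t)^2 / 2 = norm x * G * (t * (1 + t / sqrt \<kappa>))"
  proof -
    have half: "G / 2 = norm x / sqrt \<kappa>" using gbarB_half_square[OF \<kappa>, of x] by (simp add: G_def)
    have "(G * t)^2 / 2 = G * t * t * (G / 2)" by (simp add: power2_eq_square)
    also have "\<dots> = norm x * G * t * (t / sqrt \<kappa>)" unfolding half by simp
    finally show ?thesis by (simp add: algebra_simps)
  qed
  moreover have "\<dots> \<le> norm x * G * (\<epsilon> * (1 + \<epsilon> / sqrt \<kappa>))"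
    using t \<kappa> G by (intro mult_left_mono mult_mono add_left_mono divide_right_mono) auto
  ultimately show ?thesis by (simp add: G_def abs_le_iff)
qed

lemma weight_measurable_condA:
  assumes A: "condA g"
  shows "(\<lambda>x::real^'m. norm x * gbarA g ((norm x)^2/2)) \<in> borel_measurable borel"
proof -
  define h where "h t = gbarA g (max 0 t)" for t
  have "mono h" unfolding h_def mono_def by (auto intro!: gbarA_mono[OF A])
  then have "h \<in> borel_measurable borel" by (rule borel_measurable_mono)
  then have "(\<lambda>x::real^'m. h ((norm x)^2/2)) \<in> borel_measurable borel"
    by (rule measurable_compose[rotated])
       (intro borel_measurable_continuous_onI continuous_intros, auto)
  then have "(\<lambda>x::real^'m. norm x * h ((norm x)^2/2)) \<in> borel_measurable borel"
    by (intro borel_measurable_times) (auto intro: borel_measurable_continuous_onI continuous_intros)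
  then show ?thesis by (simp add: h_def)
qed

lemma weight_measurable_gbarB:
  "(\<lambda>x::real^'m. norm x * gbarB \<kappa> ((norm x)^2/2)) \<in> borel_measurable borel"
  unfolding gbarB_def divide_inverse by (intro borel_measurable_continuous_onI continuous_intros)

lemma fx_measurable: "penalty g \<Longrightarrow> (\<lambda>x::real^'m. fx g x D) \<in> borel_measurable borel"
  by (intro borel_measurable_continuous_onI penalty.fx_continuous)

lemma integral_diff_le_weight_integrable:
  fixes f1 f2 \<phi> :: "'a \<Rightarrow> real"
  assumes f1: "integrable P f1" and f2: "f2 \<in> borel_measurable P"
    and \<phi>: "integrable P \<phi>" "integral\<^sup>L P \<phi> \<le> L"
    and lip: "\<And>x. \<bar>f1 x - f2 x\<bar> \<le> \<phi> x * k" and k: "k \<ge> 0"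
  shows "integrable P f2 \<and> \<bar>integral\<^sup>L P f1 - integral\<^sup>L P f2\<bar> \<le> L * k"
proof
  have \<phi>k: "integrable P (\<lambda>x. \<phi> x * k)" using \<phi> by simp
  show f2_int: "integrable P f2"
  proof (rule Bochner_Integration.integrable_bound[OF _ f2])
    show "integrable P (\<lambda>x. \<bar>f1 x\<bar> + \<phi> x * k)" using f1 \<phi>k by simp
    show "AE x in P. norm (f2 x) \<le> norm (\<bar>f1 x\<bar> + \<phi> x * k)"
      using lip by (auto intro!: always_eventually) (smt (verit))
  qed
  have "\<bar>integral\<^sup>L P f1 - integral\<^sup>L P f2\<bar> = \<bar>integral\<^sup>L P (\<lambda>x. f1 x - f2 x)\<bar>"
    using f1 f2_int by simp
  also have "\<dots> \<le> integral\<^sup>L P (\<lambda>x. \<bar>f1 x - f2 x\<bar>)" by (rule integral_abs_bound)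
  also have "\<dots> \<le> integral\<^sup>L P (\<lambda>x. \<phi> x * k)" using f1 f2_int \<phi>k lip by (intro integral_mono) auto
  also have "\<dots> \<le> L * k" using \<phi>(2) k by (simp add: mult_right_mono)
  finally show "\<bar>integral\<^sup>L P f1 - integral\<^sup>L P f2\<bar> \<le> L * k" .
qed

text \<open>The same for Bochner integrals without integrability assumptions (if neither function is
  integrable, both integrals are 0).\<close>

lemma integral_diff_le_weight:
  fixes f1 f2 \<phi> :: "'a \<Rightarrow> real"
  assumes f1: "f1 \<in> borel_measurable P" and f2: "f2 \<in> borel_measurable P"
    and \<phi>_meas: "\<phi> \<in> borel_measurable P" and \<phi>_nonneg: "\<And>x. 0 \<le> \<phi> x"
    and \<phi>_int: "(\<integral>\<^sup>+ x. ennreal (\<phi> x) \<partial>P) < ennreal L"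
    and lip: "\<And>x. \<bar>f1 x - f2 x\<bar> \<le> \<phi> x * k" and k: "k \<ge> 0"
  shows "\<bar>integral\<^sup>L P f1 - integral\<^sup>L P f2\<bar> \<le> L * k"
proof -
  have \<phi>: "integrable P \<phi>"
    by (rule integrableI_nonneg[OF \<phi>_meas]) (use \<phi>_nonneg \<phi>_int in \<open>auto intro: order.strict_trans\<close>)
  have "ennreal (integral\<^sup>L P \<phi>) < ennreal L"
    using \<phi>_int nn_integral_eq_integral[OF \<phi>] \<phi>_nonneg by simp
  then have \<phi>_le: "integral\<^sup>L P \<phi> \<le> L"
    using integral_nonneg_AE[of \<phi> P] \<phi>_nonneg by (simp add: ennreal_less_iff)
  have L: "L \<ge> 0"
  proof (rule ccontr)
    assume "\<not> L \<ge> 0"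
    then have "ennreal L = 0" by (simp add: ennreal_neg)
    then show False using \<phi>_int by simp
  qed
  consider "integrable P f1" | "integrable P f2" | "\<not> integrable P f1" "\<not> integrable P f2"
    by blast
  then show ?thesis
  proof cases
    case 1
    from integral_diff_le_weight_integrable[OF 1 f2 \<phi> \<phi>_le lip k] show ?thesis by simp
  next
    case 2
    from integral_diff_le_weight_integrable[OF 2 f1 \<phi> \<phi>_le _ k] lip show ?thesis
      by (simp add: abs_minus_commute)
  next
    case 3
    then show ?thesis using L k by (simp add: not_integrable_integral_eq)
  qed
qed

lemma Ef_lipschitz:
  fixes P :: "(real^'m) measure" and g :: "real^'d \<Rightarrow> ereal"
  assumes sP: "sets P = sets borel" and L: "LP P gbar < ennreal L"
    and weight_meas: "(\<lambda>x::real^'m. norm x * gbar ((norm x)^2/2)) \<in> borel_measurable borel"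
    and weight_nonneg: "\<And>x::real^'m. 0 \<le> norm x * gbar ((norm x)^2/2)"
    and fx_meas: "\<And>D. (\<lambda>x::real^'m. fx g x D) \<in> borel_measurable borel"
    and lip: "\<And>x. \<bar>fx g x D - fx g x q\<bar> \<le> norm x * gbar ((norm x)^2/2) * k" and k: "k \<ge> 0"
  shows "\<bar>Ef P g D - Ef P g q\<bar> \<le> L * k"
  unfolding Ef_def
proof (rule integral_diff_le_weight[where \<phi> = "\<lambda>x. norm x * gbar ((norm x)^2/2)"])
  show "(\<lambda>x. fx g x D) \<in> borel_measurable P" "(\<lambda>x. fx g x q) \<in> borel_measurable P"
    "(\<lambda>x. norm x * gbar ((norm x)^2/2)) \<in> borel_measurable P"
    using fx_meas weight_meas unfolding measurable_cong_sets[OF sP refl] by blast+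
qed (use weight_nonneg lip k L in \<open>auto simp: LP_def\<close>)

lemma FX_lipschitz:
  assumes lip: "\<And>x. \<bar>fx g x D - fx g x q\<bar> \<le> norm x * gbar ((norm x)^2/2) * k"
  shows "\<bar>FX g n X D - FX g n X q\<bar> \<le> LX gbar n X * k"
proof -
  have "\<bar>FX g n X D - FX g n X q\<bar> = \<bar>\<Sum>i<n. fx g (X i) D - fx g (X i) q\<bar> / real n"
    by (simp add: FX_def sum_subtractf diff_divide_distrib[symmetric])
  also have "\<dots> \<le> (\<Sum>i<n. norm (X i) * gbar ((norm (X i))^2/2) * k) / real n"
    by (intro divide_right_mono order_trans[OF sum_abs] sum_mono lip) simp
  also have "\<dots> = LX gbar n X * k" by (simp add: LX_def sum_distrib_right)
  finally show ?thesis .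
qed

lemma sample_average_measurable:
  assumes sP: "sets P = sets borel" and f: "f \<in> borel_measurable borel"
  shows "(\<lambda>X. (\<Sum>i<n. f (X i)) / real n) \<in> borel_measurable (sampleM P n)"
proof -
  have "(\<lambda>X. f (X i)) \<in> borel_measurable (sampleM P n)" if "i < n" for i
  proof (rule measurable_compose[of _ _ P])
    show "(\<lambda>X. X i) \<in> measurable (sampleM P n) P"
      unfolding sampleM_def using that by (intro measurable_component_singleton) auto
    show "f \<in> borel_measurable P" using f by (simp add: measurable_cong_sets[OF sP refl])
  qed
  then show ?thesis by (intro borel_measurable_divide borel_measurable_sum) auto
qed

lemma countable_net:
  fixes \<D> :: "'a::{metric_space,second_countable_topology} set"
  assumes "e > 0"
  obtains Q where "countable Q" "Q \<subseteq> \<D>" "\<And>D. D \<in> \<D> \<Longrightarrow> \<exists>q\<in>Q. dist D q < e"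
proof -
  obtain Q0 :: "'a set" where Q0: "countable Q0" "\<And>X. open X \<Longrightarrow> X \<noteq> {} \<Longrightarrow> \<exists>d\<in>Q0. d \<in> X"
    using countable_dense_setE by blast
  define pick where "pick q0 = (SOME p. p \<in> \<D> \<and> dist q0 p < e/2)" for q0
  define Q where "Q = pick ` {q0\<in>Q0. \<exists>p\<in>\<D>. dist q0 p < e/2}"
  have pick: "pick q0 \<in> \<D> \<and> dist q0 (pick q0) < e/2" if "\<exists>p\<in>\<D>. dist q0 p < e/2" for q0
    unfolding pick_def using that by (metis (mono_tags, lifting) someI_ex)
  show ?thesis
  proof
    show "countable Q" unfolding Q_def using Q0(1) by auto
    show "Q \<subseteq> \<D>" unfolding Q_def using pick by auto
    fix D assume D: "D \<in> \<D>"
    obtain q0 where q0: "q0 \<in> Q0" "q0 \<in> ball D (e/2)" using Q0(2)[of "ball D (e/2)"] assms by auto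
    have near: "\<exists>p\<in>\<D>. dist q0 p < e/2" using D q0 by (auto simp: dist_commute intro!: bexI[of _ D])
    have "dist D (pick q0) \<le> dist D q0 + dist q0 (pick q0)" by (rule dist_triangle)
    also have "\<dots> < e" using pick[OF near] q0 by simp
    finally show "\<exists>q\<in>Q. dist D q < e" using near q0 unfolding Q_def by auto
  qed
qed

lemma covN_attained:
  assumes "covN \<D> \<epsilon> \<noteq> \<top>"
  obtains Q where "finite Q" "Q \<subseteq> \<D>" "\<And>D. D \<in> \<D> \<Longrightarrow> \<exists>q\<in>Q. norm12 (D - q) \<le> \<epsilon>"
    "covN \<D> \<epsilon> = of_nat (card Q)"
proof -
  define S where "S = {Q. finite Q \<and> Q \<subseteq> \<D> \<and> (\<forall>D\<in>\<D>. \<exists>q\<in>Q. norm12 (D - q) \<le> \<epsilon>)}"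
  have cov: "covN \<D> \<epsilon> = (INF Q\<in>S. of_nat (card Q))" unfolding covN_def S_def ..
  then have "S \<noteq> {}" using assms by auto
  then obtain Q where Q: "Q \<in> S" and least: "\<And>Q'. Q' \<in> S \<Longrightarrow> card Q \<le> card Q'"
    using ex_has_least_nat[of "\<lambda>Q. Q \<in> S" _ card] by blast
  have "covN \<D> \<epsilon> = of_nat (card Q)"
    unfolding cov by (rule antisym[OF INF_lower[OF Q] INF_greatest]) (simp add: least)
  then show ?thesis using Q that by (auto simp: S_def)
qed

text \<open>Since \<open>\<infinity> \<cdot> 0 = 0\<close> in
  \<open>ennreal\<close>, a countable net is needed when no finite one exists.\<close>

lemma net_union_bound:
  fixes M :: "'a measure" and B :: "real^'d^'m \<Rightarrow> 'a set"
  assumes A: "A \<in> sets M" and B: "\<And>q. B q \<in> sets M"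
    and B_le: "\<And>q. q \<in> \<D> \<Longrightarrow> emeasure M (B q) \<le> \<Gamma>" and \<epsilon>: "\<epsilon> > 0"
  obtains Q where "Q \<subseteq> \<D>" "\<forall>D\<in>\<D>. \<exists>q\<in>Q. norm12 (D - q) \<le> \<epsilon>"
    "A \<union> (\<Union>q\<in>Q. B q) \<in> sets M"
    "emeasure M (A \<union> (\<Union>q\<in>Q. B q)) \<le> emeasure M A + covN \<D> \<epsilon> * \<Gamma>"
proof (cases "covN \<D> \<epsilon> = \<top>")
  case False
  then obtain Q where Q: "finite Q" "Q \<subseteq> \<D>" "\<And>D. D \<in> \<D> \<Longrightarrow> \<exists>q\<in>Q. norm12 (D - q) \<le> \<epsilon>"
    and card: "covN \<D> \<epsilon> = of_nat (card Q)"
    using covN_attained by blast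
  have "emeasure M (A \<union> (\<Union>q\<in>Q. B q)) \<le> emeasure M A + emeasure M (\<Union>q\<in>Q. B q)"
    using A B Q(1) by (intro emeasure_subadditive) auto
  also have "emeasure M (\<Union>q\<in>Q. B q) \<le> (\<Sum>q\<in>Q. emeasure M (B q))"
    using B Q(1) by (intro emeasure_subadditive_finite) auto
  also have "\<dots> \<le> (\<Sum>q\<in>Q. \<Gamma>)" using B_le Q(2) by (intro sum_mono) auto
  also have "\<dots> = covN \<D> \<epsilon> * \<Gamma>" by (simp add: card)
  finally have "emeasure M (A \<union> (\<Union>q\<in>Q. B q)) \<le> emeasure M A + covN \<D> \<epsilon> * \<Gamma>"
    by (simp add: add_left_mono)
  moreover have "A \<union> (\<Union>q\<in>Q. B q) \<in> sets M" using A B Q(1) by auto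
  ultimately show ?thesis using that Q(2,3) by blast
next
  case True
  \<comment> \<open>No finite net: take a countable one; the bound is trivial unless \<open>\<Gamma> = 0\<close>,
    and then every \<open>B q\<close> is a null set.\<close>
  obtain Q where Q: "countable Q" "Q \<subseteq> \<D>" "\<And>D. D \<in> \<D> \<Longrightarrow> \<exists>q\<in>Q. dist D q < \<epsilon>"
    using countable_net[OF \<epsilon>] by blast
  have net: "\<exists>q\<in>Q. norm12 (D - q) \<le> \<epsilon>" if "D \<in> \<D>" for D
    using Q(3)[OF that] norm12_le_norm by (smt (verit) dist_norm)
  have sets: "A \<union> (\<Union>q\<in>Q. B q) \<in> sets M" using A B Q(1) by auto
  have bound: "emeasure M (A \<union> (\<Union>q\<in>Q. B q)) \<le> emeasure M A + covN \<D> \<epsilon> * \<Gamma>"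
  proof (cases "\<Gamma> = 0")
    case True
    then have "(\<Union>q\<in>Q. B q) \<in> null_sets M"
      using B B_le Q(1,2) by (intro null_sets_UN') (auto intro: null_setsI)
    then show ?thesis
      using A by (simp add: emeasure_Un_null_set)
  next
    case False
    then show ?thesis using \<open>covN \<D> \<epsilon> = \<top>\<close> by (simp add: ennreal_top_mult_right)
  qed
  show ?thesis using that Q(2) net sets bound by blast
qed

lemma uniform_deviation:
  fixes P :: "(real^'m) measure" and g :: "real^'d \<Rightarrow> ereal" and \<D> :: "(real^'d^'m) set"
    and gbar :: "real \<Rightarrow> real"
  assumes sP: "sets P = sets borel" and L: "LP P gbar < ennreal L"
    and weight_meas: "(\<lambda>x::real^'m. norm x * gbar ((norm x)^2/2)) \<in> borel_measurable borel"
    and weight_nonneg: "\<And>x::real^'m. 0 \<le> norm x * gbar ((norm x)^2/2)"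
    and fx_meas: "\<And>D. (\<lambda>x::real^'m. fx g x D) \<in> borel_measurable borel"
    and k: "k \<ge> 0" and \<epsilon>: "\<epsilon> > 0"
    and lip: "\<And>x D q. D \<in> \<D> \<Longrightarrow> q \<in> \<D> \<Longrightarrow> norm12 (D - q) \<le> \<epsilon> \<Longrightarrow>
                 \<bar>fx g x D - fx g x q\<bar> \<le> norm x * gbar ((norm x)^2/2) * k"
  shows "except_prob (sampleM P n) (Lambda_n P gbar n L + covN \<D> \<epsilon> * Gamma_n P g \<D> n \<gamma>)
           (\<lambda>X. \<forall>D\<in>\<D>. \<bar>FX g n X D - Ef P g D\<bar> \<le> 2 * L * k + \<gamma>)"
proof -
  define M where "M = sampleM P n"
  define A where "A = {X \<in> space M. L < LX gbar n X}"
  define B where "B q = {X \<in> space M. \<gamma> < \<bar>FX g n X q - Ef P g q\<bar>}" for q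
  have "(\<lambda>X. LX gbar n X) \<in> borel_measurable M"
    unfolding LX_def M_def by (rule sample_average_measurable[OF sP weight_meas])
  then have A_sets: "A \<in> sets M" unfolding A_def by measurable
  have "(\<lambda>X. FX g n X q) \<in> borel_measurable M" for q
    unfolding FX_def M_def by (rule sample_average_measurable[OF sP fx_meas])
  then have B_sets: "B q \<in> sets M" for q unfolding B_def by measurable
  have B_le: "emeasure M (B q) \<le> Gamma_n P g \<D> n \<gamma>" if "q \<in> \<D>" for q
    unfolding Gamma_n_def B_def M_def using that by (intro SUP_upper) auto
  obtain Q where Q: "Q \<subseteq> \<D>" "\<forall>D\<in>\<D>. \<exists>q\<in>Q. norm12 (D - q) \<le> \<epsilon>"
    and E: "A \<union> (\<Union>q\<in>Q. B q) \<in> sets M"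
      "emeasure M (A \<union> (\<Union>q\<in>Q. B q)) \<le> emeasure M A + covN \<D> \<epsilon> * Gamma_n P g \<D> n \<gamma>"
    by (rule net_union_bound[OF A_sets B_sets B_le \<epsilon>])
  have "\<bar>FX g n X D - Ef P g D\<bar> \<le> 2 * L * k + \<gamma>"
    if X: "X \<in> space M - (A \<union> (\<Union>q\<in>Q. B q))" and D: "D \<in> \<D>" for X D
  proof -
    obtain q where q: "q \<in> Q" "norm12 (D - q) \<le> \<epsilon>" using Q(2) D by blast
    have lip_Dq: "\<bar>fx g x D - fx g x q\<bar> \<le> norm x * gbar ((norm x)^2/2) * k" for x
      using lip[OF D _ q(2)] q(1) Q(1) by auto
    have "\<bar>FX g n X D - FX g n X q\<bar> \<le> LX gbar n X * k" by (rule FX_lipschitz[OF lip_Dq])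
    also have "\<dots> \<le> L * k" using X k by (auto simp: A_def intro: mult_right_mono)
    finally have "\<bar>FX g n X D - FX g n X q\<bar> \<le> L * k" .
    moreover have "\<bar>Ef P g D - Ef P g q\<bar> \<le> L * k"
      by (rule Ef_lipschitz[OF sP L weight_meas weight_nonneg fx_meas lip_Dq k])
    moreover have "\<bar>FX g n X q - Ef P g q\<bar> \<le> \<gamma>" using X q by (auto simp: B_def)
    ultimately show ?thesis by linarith
  qed
  then show ?thesis
    unfolding except_prob_def M_def[symmetric] Lambda_n_def A_def[symmetric] using E by blast
qed

lemma uniform_deviation_condA:
  assumes A: "condA g" and sP: "sets P = sets borel" and L: "LP P (gbarA g) < ennreal L"
    and \<epsilon>: "\<epsilon> > 0"
  shows "except_prob (sampleM P n) (Lambda_n P (gbarA g) n L + covN \<D> \<epsilon> * Gamma_n P g \<D> n \<gamma>)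
           (\<lambda>X. \<forall>D\<in>\<D>. \<bar>FX g n X D - Ef P g D\<bar> \<le> 2 * L * \<epsilon> + \<gamma>)"
proof (rule uniform_deviation[OF sP L weight_measurable_condA[OF A] _ fx_measurable _ \<epsilon>])
  show "0 \<le> norm x * gbarA g ((norm x)^2/2)" for x :: "real^'m"
    using gbarA_nonneg[OF A] by simp
  show "penalty g" by (rule penalty_condA[OF A])
  show "\<bar>fx g x D - fx g x q\<bar> \<le> norm x * gbarA g ((norm x)^2/2) * \<epsilon>"
    if "norm12 (D - q) \<le> \<epsilon>" for x D q
    using fx_lipschitz_condA[OF A that] .
qed (use \<epsilon> in simp)

lemma uniform_deviation_condB_convex:
  assumes B: "condB123 g \<D> \<kappa> K" and cv: "convex \<D>" and sP: "sets P = sets borel"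
    and L: "LP P (gbarB \<kappa>) < ennreal L" and \<epsilon>: "\<epsilon> > 0"
  shows "except_prob (sampleM P n) (Lambda_n P (gbarB \<kappa>) n L + covN \<D> \<epsilon> * Gamma_n P g \<D> n \<gamma>)
           (\<lambda>X. \<forall>D\<in>\<D>. \<bar>FX g n X D - Ef P g D\<bar> \<le> 2 * L * \<epsilon> + \<gamma>)"
proof (rule uniform_deviation[OF sP L weight_measurable_gbarB _ fx_measurable _ \<epsilon>])
  show "0 \<le> norm x * gbarB \<kappa> ((norm x)^2/2)" for x :: "real^'m"
    using B by (simp add: gbarB_nonneg condB123_def)
  show "penalty g" by (rule penalty_condB[OF B])
  show "\<bar>fx g x D - fx g x q\<bar> \<le> norm x * gbarB \<kappa> ((norm x)^2/2) * \<epsilon>"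
    if "D \<in> \<D>" "q \<in> \<D>" "norm12 (D - q) \<le> \<epsilon>" for x D q
    using fx_lipschitz_condB_convex[OF B cv that] .
qed (use \<epsilon> in simp)

lemma uniform_deviation_condB:
  assumes B: "condB123 g \<D> \<kappa> K" and sP: "sets P = sets borel"
    and L: "LP P (gbarB \<kappa>) < ennreal L" and \<epsilon>: "\<epsilon> > 0"
  shows "except_prob (sampleM P n) (Lambda_n P (gbarB \<kappa>) n L + covN \<D> \<epsilon> * Gamma_n P g \<D> n \<gamma>)
           (\<lambda>X. \<forall>D\<in>\<D>. \<bar>FX g n X D - Ef P g D\<bar> \<le> 2 * L * \<epsilon> * (1 + \<epsilon> / sqrt \<kappa>) + \<gamma>)"
proof -
  have \<kappa>: "\<kappa> > 0" using B by (simp add: condB123_def)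
  have "except_prob (sampleM P n) (Lambda_n P (gbarB \<kappa>) n L + covN \<D> \<epsilon> * Gamma_n P g \<D> n \<gamma>)
          (\<lambda>X. \<forall>D\<in>\<D>. \<bar>FX g n X D - Ef P g D\<bar> \<le> 2 * L * (\<epsilon> * (1 + \<epsilon> / sqrt \<kappa>)) + \<gamma>)"
  proof (rule uniform_deviation[OF sP L weight_measurable_gbarB _ fx_measurable _ \<epsilon>])
    show "0 \<le> norm x * gbarB \<kappa> ((norm x)^2/2)" for x :: "real^'m"
      using \<kappa> by (simp add: gbarB_nonneg)
    show "penalty g" by (rule penalty_condB[OF B])
    show "0 \<le> \<epsilon> * (1 + \<epsilon> / sqrt \<kappa>)" using \<epsilon> \<kappa> by simp
    show "\<bar>fx g x D - fx g x q\<bar> \<le> norm x * gbarB \<kappa> ((norm x)^2/2) * (\<epsilon> * (1 + \<epsilon> / sqrt \<kappa>))"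
      if "D \<in> \<D>" "q \<in> \<D>" "norm12 (D - q) \<le> \<epsilon>" for x D q
      using fx_lipschitz_condB[OF B that] .
  qed
  then show ?thesis by (simp add: mult.assoc)
qed

theorem mainTheorem12:
  fixes P :: "(real^'m) measure" and g :: "real^'d \<Rightarrow> ereal"
    and \<D> :: "(real^'d^'m) set" and gbar :: "real \<Rightarrow> real"
    and L \<epsilon> \<gamma> :: real and n :: nat
  assumes "prob_space P" and "sets P = sets borel"
    and C1: "LP P gbar < \<infinity>"
    and C2: "condC2 P g \<D>"
    and L: "LP P gbar < ennreal L"
    and "\<epsilon> > 0" and "\<gamma> > 0"
  shows "(((condA g \<and> gbar = gbarA g)
           \<or> (\<exists>\<kappa> K. condB123 g \<D> \<kappa> K \<and> convex \<D> \<and> gbar = gbarB \<kappa>))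
         \<longrightarrow> except_prob (sampleM P n)
               (Lambda_n P gbar n L + covN \<D> \<epsilon> * Gamma_n P g \<D> n \<gamma>)
               (\<lambda>X. \<forall>D\<in>\<D>. \<bar>FX g n X D - Ef P g D\<bar> \<le> 2 * L * \<epsilon> + \<gamma>))
       \<and> (\<forall>\<kappa> K. condB123 g \<D> \<kappa> K \<and> gbar = gbarB \<kappa>
         \<longrightarrow> except_prob (sampleM P n)
               (Lambda_n P gbar n L + covN \<D> \<epsilon> * Gamma_n P g \<D> n \<gamma>)
               (\<lambda>X. \<forall>D\<in>\<D>. \<bar>FX g n X D - Ef P g D\<bar> \<le> 2 * L * \<epsilon> * (1 + \<epsilon> / sqrt \<kappa>) + \<gamma>))"
proof (intro conjI impI allI)
  have sP: "sets P = sets borel" and \<epsilon>: "\<epsilon> > 0" by fact+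
  assume "(condA g \<and> gbar = gbarA g) \<or> (\<exists>\<kappa> K. condB123 g \<D> \<kappa> K \<and> convex \<D> \<and> gbar = gbarB \<kappa>)"
  then show "except_prob (sampleM P n) (Lambda_n P gbar n L + covN \<D> \<epsilon> * Gamma_n P g \<D> n \<gamma>)
      (\<lambda>X. \<forall>D\<in>\<D>. \<bar>FX g n X D - Ef P g D\<bar> \<le> 2 * L * \<epsilon> + \<gamma>)"
  proof
    assume "condA g \<and> gbar = gbarA g"
    with L show ?thesis using uniform_deviation_condA[OF _ sP _ \<epsilon>] by auto
  next
    assume "\<exists>\<kappa> K. condB123 g \<D> \<kappa> K \<and> convex \<D> \<and> gbar = gbarB \<kappa>"
    then obtain \<kappa> K where "condB123 g \<D> \<kappa> K" "convex \<D>" "gbar = gbarB \<kappa>" by blast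
    with L show ?thesis using uniform_deviation_condB_convex[OF _ _ sP _ \<epsilon>] by auto
  qed
next
  fix \<kappa> K
  have sP: "sets P = sets borel" and \<epsilon>: "\<epsilon> > 0" by fact+
  assume "condB123 g \<D> \<kappa> K \<and> gbar = gbarB \<kappa>"
  with L show "except_prob (sampleM P n) (Lambda_n P gbar n L + covN \<D> \<epsilon> * Gamma_n P g \<D> n \<gamma>)
      (\<lambda>X. \<forall>D\<in>\<D>. \<bar>FX g n X D - Ef P g D\<bar> \<le> 2 * L * \<epsilon> * (1 + \<epsilon> / sqrt \<kappa>) + \<gamma>)"
    using uniform_deviation_condB[OF _ sP _ \<epsilon>] by auto
qed

end
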